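(* Let $k \ge 2$ be an integer. If $G$ is a twin-free graph with $n$ vertices and $i_{\max}(G) = k$, then $n \le 2^{k-1}+k-1$. Furthermore, equality holds only if the graph $G$ is formed by taking a clique $K_{k-1}$ and adding, for every vertex subset $S$ of this clique, a vertex whose neighbourhood is precisely $S$.
   Context: $i_{\max}(G)$ denotes the number of maximal independent sets of $G$. A graph is twin-free if no two vertices have the same open neighbourhood. *)

theory Defs
  imports Main
begin

definition simple_graph :: "'a set \<Rightarrow> ('a \<Rightarrow> 'a \<Rightarrow> bool) \<Rightarrow> bool" where
  "simple_graph V E \<longleftrightarrow> finite V \<and> (\<forall>u v. E u v \<longrightarrow> u \<in> V \<and> v \<in> V)
     \<and> (\<forall>u v. E u v \<longrightarrow> E v u) \<and> (\<forall>v. \<not> E v v)"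

definition nbhd :: "'a set \<Rightarrow> ('a \<Rightarrow> 'a \<Rightarrow> bool) \<Rightarrow> 'a \<Rightarrow> 'a set" where
  "nbhd V E v = {w \<in> V. E v w}"

definition independent_set :: "'a set \<Rightarrow> ('a \<Rightarrow> 'a \<Rightarrow> bool) \<Rightarrow> 'a set \<Rightarrow> bool" where
  "independent_set V E S \<longleftrightarrow> S \<subseteq> V \<and> (\<forall>u\<in>S. \<forall>v\<in>S. \<not> E u v)"

definition maximal_independent_set :: "'a set \<Rightarrow> ('a \<Rightarrow> 'a \<Rightarrow> bool) \<Rightarrow> 'a set \<Rightarrow> bool" where
  "maximal_independent_set V E S \<longleftrightarrow> independent_set V E S \<and>
     (\<forall>T. independent_set V E T \<and> S \<subseteq> T \<longrightarrow> T = S)"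

definition i_max :: "'a set \<Rightarrow> ('a \<Rightarrow> 'a \<Rightarrow> bool) \<Rightarrow> nat" where
  "i_max V E = card {S. maximal_independent_set V E S}"

definition twin_free :: "'a set \<Rightarrow> ('a \<Rightarrow> 'a \<Rightarrow> bool) \<Rightarrow> bool" where
  "twin_free V E \<longleftrightarrow> (\<forall>u\<in>V. \<forall>v\<in>V. u \<noteq> v \<longrightarrow> nbhd V E u \<noteq> nbhd V E v)"

definition graph_iso :: "'a set \<Rightarrow> ('a \<Rightarrow> 'a \<Rightarrow> bool) \<Rightarrow> 'b set \<Rightarrow> ('b \<Rightarrow> 'b \<Rightarrow> bool) \<Rightarrow> bool" where
  "graph_iso V E W F \<longleftrightarrow> (\<exists>f. bij_betw f V W \<and> (\<forall>u\<in>V. \<forall>v\<in>V. E u v \<longleftrightarrow> F (f u) (f v)))"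

text \<open>The extremal graph: a clique on Inl 0, ..., Inl (k-2) together with, for every
subset S of the clique, a vertex Inr S whose neighbourhood is exactly S.\<close>

definition ext_V :: "nat \<Rightarrow> (nat + nat set) set" where
  "ext_V k = Inl ` {..<k-1} \<union> Inr ` Pow {..<k-1}"

fun ext_E_raw :: "(nat + nat set) \<Rightarrow> (nat + nat set) \<Rightarrow> bool" where
  "ext_E_raw (Inl i) (Inl j) = (i \<noteq> j)"
| "ext_E_raw (Inl i) (Inr S) = (i \<in> S)"
| "ext_E_raw (Inr S) (Inl i) = (i \<in> S)"
| "ext_E_raw (Inr S) (Inr T) = False"

definition ext_E :: "nat \<Rightarrow> (nat + nat set) \<Rightarrow> (nat + nat set) \<Rightarrow> bool" where
  "ext_E k u v \<longleftrightarrow> u \<in> ext_V k \<and> v \<in> ext_V k \<and> ext_E_raw u v"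

end

theory Submission
  imports Defs
begin

(* Send each vertex v to the set of maximal independent sets containing it. Two vertices are
   adjacent iff their images are disjoint, twin-freeness makes this map injective, and the image
   is a family F of nonempty subsets of the k-set U of maximal independent sets with the Helly
   property: a pairwise intersecting subfamily comes from an independent set, and a maximal
   independent set containing it lies in every member.

   For such a family fix x in U and replace each member avoiding x by its complement: this shows
   |F| <= 2^(k-1) + p, where p counts the complementary pairs {A, U - A} inside F. Applying Helly
   to the members containing two of three points gives a median point; with it one finds two
   points of U told apart by a single pair, and removing that pair inductively yields p <= k - 1.

   In the equality case F contains A or U - A for every A, and Helly then forces all members
   with two or more points through one point x. So F consists of all sets containing x and the
   singletons of U - {x}, and its disjointness graph is the extremal graph. *)

section \<open>Graph isomorphisms and the extremal family\<close>

lemma graph_iso_sym: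
  assumes "graph_iso V E W F"
  shows "graph_iso W F V E"
proof -
  obtain f where f: "bij_betw f V W" and edges: "\<forall>u\<in>V. \<forall>v\<in>V. E u v \<longleftrightarrow> F (f u) (f v)"
    using assms unfolding graph_iso_def by blast
  have g: "bij_betw (inv_into V f) W V" by (rule bij_betw_inv_into[OF f])
  have "\<forall>a\<in>W. \<forall>b\<in>W. F a b \<longleftrightarrow> E (inv_into V f a) (inv_into V f b)"
    using edges f bij_betw_apply[OF g] by (simp add: bij_betw_inv_into_right)
  with g show ?thesis unfolding graph_iso_def by blast
qed

lemma graph_iso_trans:
  assumes "graph_iso V E W F" and "graph_iso W F X G"
  shows "graph_iso V E X G"
proof -
  obtain f where f: "bij_betw f V W" and f_edges: "\<forall>u\<in>V. \<forall>v\<in>V. E u v \<longleftrightarrow> F (f u) (f v)"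
    using assms(1) unfolding graph_iso_def by blast
  obtain g where g: "bij_betw g W X" and g_edges: "\<forall>u\<in>W. \<forall>v\<in>W. F u v \<longleftrightarrow> G (g u) (g v)"
    using assms(2) unfolding graph_iso_def by blast
  have "\<forall>u\<in>V. \<forall>v\<in>V. E u v \<longleftrightarrow> G ((g \<circ> f) u) ((g \<circ> f) v)"
    using f_edges g_edges bij_betw_apply[OF f] by simp
  with bij_betw_trans[OF f g] show ?thesis unfolding graph_iso_def by blast
qed

lemma card_subsets_containing:
  assumes "finite U" and "x \<in> U"
  shows "card {A. A \<subseteq> U \<and> x \<in> A} = 2 ^ (card U - 1)"
proof -
  have "{A. A \<subseteq> U \<and> x \<in> A} = insert x ` Pow (U - {x})"
  proof (intro equalityI subsetI)
    fix A assume "A \<in> {A. A \<subseteq> U \<and> x \<in> A}"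
    then have "A = insert x (A - {x})" and "A - {x} \<in> Pow (U - {x})" by auto
    then show "A \<in> insert x ` Pow (U - {x})" by blast
  qed (use assms(2) in auto)
  moreover have "inj_on (insert x) (Pow (U - {x}))"
    by (rule inj_onI) blast
  ultimately show ?thesis
    using assms by (simp add: card_image card_Pow)
qed

lemma card_folded_family:
  assumes "finite U" and "F \<subseteq> Pow U" and "x \<in> U"
  shows "card F = card {A. A \<subseteq> U \<and> x \<in> A \<and> (A \<in> F \<or> U - A \<in> F)}
                  + card {A \<in> F. x \<in> A \<and> U - A \<in> F}"
proof -
  define F_in where "F_in = {A \<in> F. x \<in> A}"
  define F_out where "F_out = {A \<in> F. x \<notin> A}"
  have fin: "finite F" using assms(1,2) finite_subset by blast
  have compl_inj: "inj_on (\<lambda>A. U - A) F_out"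
    by (rule inj_onI) (use assms(2) in \<open>auto simp: F_out_def\<close>)
  have "F = F_in \<union> F_out" "F_in \<inter> F_out = {}" unfolding F_in_def F_out_def by blast+
  then have "card F = card F_in + card F_out"
    using fin card_Un_disjoint[of F_in F_out] by simp
  also have "card F_out = card ((\<lambda>A. U - A) ` F_out)"
    using compl_inj by (simp add: card_image)
  also have "card F_in + \<dots> = card (F_in \<union> (\<lambda>A. U - A) ` F_out) + card (F_in \<inter> (\<lambda>A. U - A) ` F_out)"
    using fin by (intro card_Un_Int) (auto simp: F_in_def F_out_def)
  also have "F_in \<union> (\<lambda>A. U - A) ` F_out = {A. A \<subseteq> U \<and> x \<in> A \<and> (A \<in> F \<or> U - A \<in> F)}"
    using assms(2,3) by (auto simp: F_in_def F_out_def image_iff double_diff)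
  also have "F_in \<inter> (\<lambda>A. U - A) ` F_out = {A \<in> F. x \<in> A \<and> U - A \<in> F}"
    using assms(2,3) by (auto simp: F_in_def F_out_def image_iff double_diff)
  finally show ?thesis .
qed

definition extremal_family :: "'a set \<Rightarrow> 'a \<Rightarrow> 'a set set" where
  "extremal_family U x = {A. A \<subseteq> U \<and> x \<in> A} \<union> (\<lambda>i. {i}) ` (U - {x})"

lemma card_extremal_family:
  assumes "finite U" and "x \<in> U"
  shows "card (extremal_family U x) = 2 ^ (card U - 1) + card U - 1"
proof -
  have "inj_on (\<lambda>i. {i}) (U - {x})" by (rule inj_onI) blast
  then have "card ((\<lambda>i. {i}) ` (U - {x})) = card U - 1"
    using assms by (simp add: card_image)
  moreover have "card ({A. A \<subseteq> U \<and> x \<in> A} \<union> (\<lambda>i. {i}) ` (U - {x}))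
      = card {A. A \<subseteq> U \<and> x \<in> A} + card ((\<lambda>i. {i}) ` (U - {x}))"
    using assms(1) by (intro card_Un_disjoint) auto
  moreover have "card U > 0" using assms by (auto simp: card_gt_0_iff)
  ultimately show ?thesis
    using card_subsets_containing[OF assms] unfolding extremal_family_def by simp
qed

lemma mem_ext_V_iff: "a \<in> ext_V k \<longleftrightarrow> (\<exists>i<k-1. a = Inl i) \<or> (\<exists>S\<subseteq>{..<k-1}. a = Inr S)"
  unfolding ext_V_def by blast

definition family_of_ext :: "(nat \<Rightarrow> 'a) \<Rightarrow> 'a set \<Rightarrow> nat + nat set \<Rightarrow> 'a set" where
  "family_of_ext e U a = (case a of Inl i \<Rightarrow> {e i} | Inr S \<Rightarrow> U - e ` S)"

context
  fixes e :: "nat \<Rightarrow> 'a" and U :: "'a set" and x :: 'a and k :: nat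
  assumes e_bij: "bij_betw e {..<k-1} (U - {x})" and x_in_U: "x \<in> U"
begin

private lemma e_inj: "inj_on e {..<k-1}"
  using e_bij by (simp add: bij_betw_def)

private lemma e_image: "S \<subseteq> {..<k-1} \<Longrightarrow> e ` S \<subseteq> U - {x}"
  using e_bij by (auto simp: bij_betw_def)

private lemma family_of_ext_Inl: "i < k - 1 \<Longrightarrow> family_of_ext e U (Inl i) = {e i} \<and> e i \<in> U - {x}"
  using e_image[of "{i}"] by (simp add: family_of_ext_def)

private lemma family_of_ext_Inr:
  "S \<subseteq> {..<k-1} \<Longrightarrow> x \<in> family_of_ext e U (Inr S) \<and> family_of_ext e U (Inr S) \<subseteq> U"
  using e_image[of S] x_in_U by (auto simp: family_of_ext_def)

lemma inj_on_family_of_ext: "inj_on (family_of_ext e U) (ext_V k)"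
proof (rule inj_onI)
  fix a b assume "a \<in> ext_V k" "b \<in> ext_V k" and eq: "family_of_ext e U a = family_of_ext e U b"
  then show "a = b"
    unfolding mem_ext_V_iff
  proof (elim disjE exE conjE)
    fix i j assume "i < k - 1" "a = Inl i" "j < k - 1" "b = Inl j"
    then show "a = b" using eq e_inj by (simp add: family_of_ext_def inj_on_eq_iff)
  next
    fix i S assume "i < k - 1" "a = Inl i" "S \<subseteq> {..<k-1}" "b = Inr S"
    then show "a = b" using eq family_of_ext_Inl family_of_ext_Inr by (metis DiffD2 singletonD)
  next
    fix S i assume "S \<subseteq> {..<k-1}" "a = Inr S" "i < k - 1" "b = Inl i"
    then show "a = b" using eq family_of_ext_Inl family_of_ext_Inr by (metis DiffD2 singletonD)
  next
    fix S T assume S: "S \<subseteq> {..<k-1}" "a = Inr S" and T: "T \<subseteq> {..<k-1}" "b = Inr T"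
    have "e ` S = U - (U - e ` S)" "e ` T = U - (U - e ` T)"
      using e_image[OF S(1)] e_image[OF T(1)] by blast+
    with eq S T have "e ` S = e ` T" by (simp add: family_of_ext_def)
    then show "a = b" using S T inj_on_image_eq_iff[OF e_inj] by simp
  qed
qed

lemma image_family_of_ext: "family_of_ext e U ` ext_V k = extremal_family U x"
proof (intro equalityI subsetI)
  fix A assume "A \<in> family_of_ext e U ` ext_V k"
  then obtain a where "a \<in> ext_V k" "A = family_of_ext e U a" by blast
  then show "A \<in> extremal_family U x"
    using family_of_ext_Inl family_of_ext_Inr unfolding mem_ext_V_iff extremal_family_def by blast
next
  fix A assume "A \<in> extremal_family U x"
  then consider "A \<subseteq> U" "x \<in> A" | j where "j \<in> U - {x}" "A = {j}"
    unfolding extremal_family_def by blast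
  then show "A \<in> family_of_ext e U ` ext_V k"
  proof cases
    case 1
    define S where "S = {i \<in> {..<k-1}. e i \<notin> A}"
    have "e ` S = U - A" using 1 e_bij unfolding S_def bij_betw_def by auto
    then have "family_of_ext e U (Inr S) = A" using 1 by (auto simp: family_of_ext_def)
    moreover have "Inr S \<in> ext_V k" unfolding ext_V_def S_def by auto
    ultimately show ?thesis by (metis image_eqI)
  next
    case 2
    then obtain i where "i < k - 1" "j = e i" using e_bij unfolding bij_betw_def by auto
    then have "family_of_ext e U (Inl i) = A" and "Inl i \<in> ext_V k"
      using 2 by (auto simp: family_of_ext_def ext_V_def)
    then show ?thesis by (metis image_eqI)
  qed
qed

lemma ext_E_iff_disjoint:
  assumes "a \<in> ext_V k" and "b \<in> ext_V k"
  shows "ext_E k a b \<longleftrightarrow> family_of_ext e U a \<inter> family_of_ext e U b = {}"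
  using assms unfolding mem_ext_V_iff
proof (elim disjE exE conjE)
  fix i j assume "i < k - 1" "a = Inl i" "j < k - 1" "b = Inl j"
  then show ?thesis using assms e_inj by (auto simp: ext_E_def family_of_ext_def inj_on_eq_iff)
next
  fix i S assume "i < k - 1" "a = Inl i" "S \<subseteq> {..<k-1}" "b = Inr S"
  then show ?thesis
    using assms e_image inj_on_image_mem_iff[OF e_inj] by (auto simp: ext_E_def family_of_ext_def)
next
  fix S i assume "S \<subseteq> {..<k-1}" "a = Inr S" "i < k - 1" "b = Inl i"
  then show ?thesis
    using assms e_image inj_on_image_mem_iff[OF e_inj] by (auto simp: ext_E_def family_of_ext_def)
next
  fix S T assume "S \<subseteq> {..<k-1}" "a = Inr S" "T \<subseteq> {..<k-1}" "b = Inr T"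
  then have "x \<in> family_of_ext e U a \<inter> family_of_ext e U b" using family_of_ext_Inr by blast
  then show ?thesis using \<open>a = Inr S\<close> \<open>b = Inr T\<close> by (auto simp: ext_E_def)
qed

end

lemma graph_iso_ext_extremal_family:
  assumes "finite U" and "x \<in> U" and "card U = k"
  shows "graph_iso (ext_V k) (ext_E k) (extremal_family U x) (\<lambda>A B. A \<inter> B = {})"
proof -
  have "card {..<k-1} = card (U - {x})" using assms by simp
  then obtain e where e: "bij_betw e {..<k-1} (U - {x})"
    using assms(1) finite_same_card_bij by blast
  show ?thesis
    using inj_on_family_of_ext[OF e assms(2)] image_family_of_ext[OF e assms(2)]
      ext_E_iff_disjoint[OF e assms(2)]
    unfolding graph_iso_def bij_betw_def by blast
qed

section \<open>Families of sets with the Helly property\<close>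

definition profile :: "'a set set \<Rightarrow> 'a \<Rightarrow> 'a set set" where
  "profile Q u = {A \<in> Q. u \<in> A}"

lemma mem_profile_iff [simp]: "A \<in> profile Q u \<longleftrightarrow> A \<in> Q \<and> u \<in> A"
  by (simp add: profile_def)

locale helly_family =
  fixes U :: "'a set" and F :: "'a set set"
  assumes finite_ground: "finite U"
    and member_subset: "A \<in> F \<Longrightarrow> A \<subseteq> U"
    and empty_notin: "{} \<notin> F"
    and helly: "I \<subseteq> F \<Longrightarrow> \<forall>A\<in>I. \<forall>B\<in>I. A \<inter> B \<noteq> {} \<Longrightarrow> \<exists>u\<in>U. \<forall>A\<in>I. u \<in> A"
begin

lemma family_subset_Pow: "F \<subseteq> Pow U"
  using member_subset by blast

lemma finite_family: "finite F"
  using finite_ground family_subset_Pow finite_subset by blast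

lemma ground_nonempty: "U \<noteq> {}"
  using helly[of "{}"] by blast

lemma card_ground_pos: "0 < card U"
  by (simp add: card_gt_0_iff finite_ground ground_nonempty)

lemma helly_triple:
  assumes "A \<in> F" "B \<in> F" "C \<in> F" "A \<inter> B \<noteq> {}" "A \<inter> C \<noteq> {}" "B \<inter> C \<noteq> {}"
  shows "A \<inter> B \<inter> C \<noteq> {}"
proof -
  have "A \<noteq> {}" "B \<noteq> {}" "C \<noteq> {}" using assms(1-3) empty_notin by auto
  moreover have "B \<inter> A \<noteq> {}" "C \<inter> A \<noteq> {}" "C \<inter> B \<noteq> {}"
    using assms(4-6) by (simp_all add: Int_commute)
  ultimately have "\<forall>X\<in>{A, B, C}. \<forall>Y\<in>{A, B, C}. X \<inter> Y \<noteq> {}"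
    using assms(4-6) by simp
  then obtain u where "\<forall>X\<in>{A, B, C}. u \<in> X"
    using helly[of "{A, B, C}"] assms(1-3) by blast
  then show ?thesis by blast
qed

(* The members of Q containing two of u, v, w pairwise intersect, so by Helly they share a
   point z, a median of u, v, w, whose profile lies strictly between those of u and v. *)
lemma median_profile_closer:
  assumes Q: "Q \<subseteq> F" "\<forall>C\<in>Q. U - C \<in> Q"
    and "v \<in> U" "w \<in> U" "A \<in> Q" "B \<in> Q"
    and "u \<in> A" "u \<in> B" "v \<notin> A" "v \<notin> B" "w \<in> A" "w \<notin> B"
  obtains z where "z \<in> U" "profile Q z \<noteq> profile Q u"
    "card (sym_diff (profile Q z) (profile Q u)) < card (sym_diff (profile Q u) (profile Q v))"
proof -
  have "u \<in> U" using assms(5,7) Q(1) member_subset by blast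
  define I where "I = {C \<in> Q. (u \<in> C \<and> v \<in> C) \<or> (u \<in> C \<and> w \<in> C) \<or> (v \<in> C \<and> w \<in> C)}"
  have "I \<subseteq> F" using Q(1) unfolding I_def by blast
  moreover have "\<forall>C\<in>I. \<forall>D\<in>I. C \<inter> D \<noteq> {}" unfolding I_def by blast
  ultimately obtain z where "z \<in> U" and z_in_I: "\<forall>C\<in>I. z \<in> C"
    using helly by blast
  have profile_z: "profile Q z = I"
  proof (intro equalityI subsetI)
    fix C assume C: "C \<in> profile Q z"
    show "C \<in> I"
    proof (rule ccontr)
      assume "C \<notin> I"
      with C have "U - C \<in> I"
        using Q(2) \<open>u \<in> U\<close> assms(3,4) unfolding I_def by auto
      then show False using z_in_I C by auto
    qed
  qed (use z_in_I in \<open>simp add: I_def\<close>)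
  have "U - B \<in> profile Q z" "U - B \<notin> profile Q u"
    using Q(2) assms(3,4,6,8,10,12) unfolding profile_z I_def by auto
  then have "profile Q z \<noteq> profile Q u" by blast
  moreover have "sym_diff (profile Q z) (profile Q u) \<subset> sym_diff (profile Q u) (profile Q v)"
  proof
    show "sym_diff (profile Q z) (profile Q u) \<subseteq> sym_diff (profile Q u) (profile Q v)"
      unfolding profile_z I_def by auto
    have "A \<in> profile Q z \<inter> profile Q u - profile Q v"
      using assms(5,7,9,11) unfolding profile_z I_def by auto
    then show "sym_diff (profile Q z) (profile Q u) \<noteq> sym_diff (profile Q u) (profile Q v)"
      by blast
  qed
  moreover have "finite (sym_diff (profile Q u) (profile Q v))"
    using finite_subset[OF Q(1) finite_family] by (simp add: profile_def)
  ultimately show ?thesis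
    using that \<open>z \<in> U\<close> by (meson psubset_card_mono)
qed

lemma profile_closer:
  assumes Q: "Q \<subseteq> F" "\<forall>C\<in>Q. U - C \<in> Q"
    and "v \<in> U" "A \<in> Q" "B \<in> Q" "A \<noteq> B"
    and "u \<in> A" "u \<in> B" "v \<notin> A" "v \<notin> B"
  obtains z where "z \<in> U" "profile Q z \<noteq> profile Q u"
    "card (sym_diff (profile Q z) (profile Q u)) < card (sym_diff (profile Q u) (profile Q v))"
proof -
  have "A \<subseteq> U" "B \<subseteq> U" using assms(4,5) Q(1) member_subset by blast+
  with \<open>A \<noteq> B\<close> obtain w where "w \<in> U" "w \<in> A \<and> w \<notin> B \<or> w \<in> B \<and> w \<notin> A"
    by blast
  then show ?thesis
    using median_profile_closer[OF Q \<open>v \<in> U\<close> \<open>w \<in> U\<close>] assms(4-) that by metis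
qed

lemma profiles_differing_in_one_pair:
  assumes Q: "Q \<subseteq> F" "\<forall>C\<in>Q. U - C \<in> Q" and "Q \<noteq> {}"
  obtains u v A where "u \<in> U" "v \<in> U" "A \<in> Q" "profile Q u \<noteq> profile Q v"
    "profile Q u - {A, U - A} = profile Q v - {A, U - A}"
proof -
  define P where "P p \<longleftrightarrow> fst p \<in> U \<and> snd p \<in> U \<and> profile Q (fst p) \<noteq> profile Q (snd p)" for p
  define d where "d p = card (sym_diff (profile Q (fst p)) (profile Q (snd p)))" for p
  obtain A0 where "A0 \<in> Q" using assms(3) by blast
  then have "A0 \<in> F" "U - A0 \<in> F" using Q by blast+
  then have "A0 \<noteq> {}" "U - A0 \<noteq> {}" using empty_notin by metis+
  then obtain u0 v0 where "u0 \<in> A0" "v0 \<in> U - A0" by blast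
  then have "P (u0, v0)" using \<open>A0 \<in> Q\<close> \<open>A0 \<in> F\<close> member_subset unfolding P_def by auto
  then obtain u v where "P (u, v)" and d_min: "\<And>p. P p \<Longrightarrow> d (u, v) \<le> d p"
    using ex_has_least_nat[of P "(u0, v0)" d] by (metis prod.collapse)
  then have uv: "u \<in> U" "v \<in> U" "profile Q u \<noteq> profile Q v" unfolding P_def by simp_all
  have separating: "\<exists>C\<in>Q. u \<in> C \<and> v \<notin> C" if "C \<in> Q" "u \<in> C \<longleftrightarrow> v \<notin> C" for C
    using that Q(2) uv(1,2) by (cases "u \<in> C") auto
  from uv(3) obtain C0 where "C0 \<in> Q" "u \<in> C0 \<longleftrightarrow> v \<notin> C0"
    unfolding profile_def by blast
  then obtain A where A: "A \<in> Q" "u \<in> A" "v \<notin> A"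
    using separating by blast
  have "profile Q u - {A, U - A} = profile Q v - {A, U - A}"
  proof (rule ccontr)
    assume "profile Q u - {A, U - A} \<noteq> profile Q v - {A, U - A}"
    then obtain C where C: "C \<in> Q" "C \<noteq> A" "C \<noteq> U - A" "u \<in> C \<longleftrightarrow> v \<notin> C"
      unfolding profile_def by blast
    define B where "B = (if u \<in> C then C else U - C)"
    have "A \<subseteq> U" "C \<subseteq> U" using A(1) C(1) Q(1) member_subset by blast+
    then have B: "B \<in> Q" "A \<noteq> B" "u \<in> B" "v \<notin> B"
      using C Q(2) uv(1,2) unfolding B_def by (auto simp: double_diff)
    obtain z where "z \<in> U" "profile Q z \<noteq> profile Q u"
      "card (sym_diff (profile Q z) (profile Q u)) < card (sym_diff (profile Q u) (profile Q v))"
      by (rule profile_closer[OF Q uv(2) A(1) B(1,2) A(2) B(3) A(3) B(4)])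
    then show False using d_min[of "(z, u)"] uv(1) unfolding P_def d_def by simp
  qed
  then show ?thesis by (rule that[OF uv(1,2) A(1) uv(3)])
qed

lemma remove_complementary_pair:
  assumes Q: "Q \<subseteq> F" "\<forall>C\<in>Q. U - C \<in> Q" and "A \<in> Q"
  shows "card Q = card (Q - {A, U - A}) + 2"
    and "\<forall>C \<in> Q - {A, U - A}. U - C \<in> Q - {A, U - A}"
proof -
  have "A \<in> F" "A \<subseteq> U" using assms(3) Q(1) member_subset by blast+
  then have "A \<noteq> {}" using empty_notin by metis
  then have "A \<noteq> U - A" by blast
  then have pair: "card {A, U - A} = 2" by simp
  have "{A, U - A} \<subseteq> Q" using assms(3) Q(2) by blast
  moreover have "finite Q" using finite_subset[OF Q(1) finite_family] .
  ultimately have "card (Q - {A, U - A}) = card Q - 2" and "2 \<le> card Q"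
    using card_Diff_subset[of "{A, U - A}" Q] card_mono[of Q "{A, U - A}"] pair by simp_all
  then show "card Q = card (Q - {A, U - A}) + 2" by simp
  show "\<forall>C \<in> Q - {A, U - A}. U - C \<in> Q - {A, U - A}"
  proof
    fix C assume C: "C \<in> Q - {A, U - A}"
    then have "C \<subseteq> U" using Q(1) member_subset by blast
    with C show "U - C \<in> Q - {A, U - A}"
      using Q(2) \<open>A \<subseteq> U\<close> by (auto simp: double_diff)
  qed
qed

(* Q is a union of complementary pairs: the claim is that the profiles split U into more
   classes than there are pairs. *)
lemma card_le_twice_card_profiles:
  assumes "Q \<subseteq> F" and "\<forall>C\<in>Q. U - C \<in> Q"
  shows "card Q + 2 \<le> 2 * card (profile Q ` U)"
  using assms
proof (induction "card Q" arbitrary: Q rule: less_induct)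
  case less
  show ?case
  proof (cases "Q = {}")
    case True
    then have "profile Q ` U = {{}}" using ground_nonempty by (simp add: profile_def image_constant_conv)
    then show ?thesis using True by simp
  next
    case False
    obtain u v A where uv: "u \<in> U" "v \<in> U" "A \<in> Q" "profile Q u \<noteq> profile Q v"
        "profile Q u - {A, U - A} = profile Q v - {A, U - A}"
      by (rule profiles_differing_in_one_pair[OF less.prems False])
    define Q' where "Q' = Q - {A, U - A}"
    note card_Q = remove_complementary_pair(1)[OF less.prems uv(3), folded Q'_def]
    have "card Q' + 2 \<le> 2 * card (profile Q' ` U)"
      using less.hyps[of Q'] less.prems(1) card_Q remove_complementary_pair(2)[OF less.prems uv(3)]
      unfolding Q'_def by auto
    moreover define forget where "forget X = X - {A, U - A}" for X
    have "profile Q' ` U = forget ` profile Q ` U"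
      unfolding Q'_def forget_def profile_def image_image by auto
    moreover have "\<not> inj_on forget (profile Q ` U)"
      using uv unfolding forget_def inj_on_def by blast
    then have "card (forget ` profile Q ` U) < card (profile Q ` U)"
      using card_image_le[of "profile Q ` U" forget] inj_on_iff_eq_card[of "profile Q ` U" forget]
        finite_ground by simp
    ultimately show ?thesis using card_Q by simp
  qed
qed

lemma card_complementary_pairs:
  assumes "x \<in> U"
  shows "card {A \<in> F. x \<in> A \<and> U - A \<in> F} + 1 \<le> card U"
proof -
  define Q where "Q = {A \<in> F. U - A \<in> F}"
  define P where "P = {A \<in> F. x \<in> A \<and> U - A \<in> F}"
  have "\<forall>C\<in>Q. U - C \<in> Q"
    unfolding Q_def using member_subset by (auto simp: double_diff)
  then have "card Q + 2 \<le> 2 * card (profile Q ` U)"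
    by (intro card_le_twice_card_profiles) (auto simp: Q_def)
  moreover have "card (profile Q ` U) \<le> card U" using card_image_le[OF finite_ground] .
  moreover have "Q = P \<union> (\<lambda>A. U - A) ` P"
  proof (intro equalityI subsetI)
    fix A assume A: "A \<in> Q"
    show "A \<in> P \<union> (\<lambda>A. U - A) ` P"
    proof (cases "x \<in> A")
      case False
      have "A \<subseteq> U" using A member_subset unfolding Q_def by blast
      then have "U - A \<in> P" "A = U - (U - A)"
        using A False assms unfolding Q_def P_def by (auto simp: double_diff)
      then show ?thesis by blast
    qed (use A in \<open>simp add: Q_def P_def\<close>)
  qed (use member_subset in \<open>auto simp: Q_def P_def double_diff\<close>)
  moreover have "P \<inter> (\<lambda>A. U - A) ` P = {}"
    unfolding P_def by blast
  moreover have "inj_on (\<lambda>A. U - A) P"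
    by (rule inj_onI) (use member_subset in \<open>auto simp: P_def double_diff\<close>)
  moreover have "finite P" using finite_family by (simp add: P_def)
  ultimately show ?thesis unfolding P_def
    by (simp add: card_Un_disjoint card_image)
qed

lemma card_le_card_folded:
  assumes "x \<in> U"
  shows "card F \<le> card {A. A \<subseteq> U \<and> x \<in> A \<and> (A \<in> F \<or> U - A \<in> F)} + card U - 1"
  using card_folded_family[OF finite_ground family_subset_Pow assms] card_complementary_pairs[OF assms]
  by linarith

lemma card_le: "card F \<le> 2 ^ (card U - 1) + card U - 1"
proof -
  obtain x where x: "x \<in> U" using ground_nonempty by blast
  have "card {A. A \<subseteq> U \<and> x \<in> A \<and> (A \<in> F \<or> U - A \<in> F)} \<le> card {A. A \<subseteq> U \<and> x \<in> A}"
    by (rule card_mono) (use finite_ground in auto)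
  then show ?thesis
    using card_le_card_folded[OF x] card_subsets_containing[OF finite_ground x] by linarith
qed

lemma complete_if_card_eq:
  assumes card_eq: "card F = 2 ^ (card U - 1) + card U - 1" and "A \<subseteq> U"
  shows "A \<in> F \<or> U - A \<in> F"
proof -
  obtain x where x: "x \<in> U" using ground_nonempty by blast
  define folded where "folded = {A. A \<subseteq> U \<and> x \<in> A \<and> (A \<in> F \<or> U - A \<in> F)}"
  have "folded \<subseteq> {A. A \<subseteq> U \<and> x \<in> A}" unfolding folded_def by blast
  moreover have "card {A. A \<subseteq> U \<and> x \<in> A} \<le> card folded"
    using card_le_card_folded[OF x] card_subsets_containing[OF finite_ground x] card_eq
      card_ground_pos
    unfolding folded_def by linarith
  ultimately have folded_eq: "folded = {A. A \<subseteq> U \<and> x \<in> A}"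
    by (intro card_seteq) (use finite_ground in auto)
  show ?thesis
  proof (cases "x \<in> A")
    case True
    then show ?thesis using folded_eq \<open>A \<subseteq> U\<close> unfolding folded_def by blast
  next
    case False
    then have "U - A \<in> folded" using folded_eq x by blast
    then show ?thesis unfolding folded_def using \<open>A \<subseteq> U\<close> by (auto simp: double_diff)
  qed
qed

lemma non_singletons_intersect:
  assumes complete: "\<And>X. X \<subseteq> U \<Longrightarrow> X \<in> F \<or> U - X \<in> F"
    and "A \<in> F" "a1 \<in> A" "a2 \<in> A" "a1 \<noteq> a2"
    and "B \<in> F" "b1 \<in> B" "b2 \<in> B" "b1 \<noteq> b2"
  shows "A \<inter> B \<noteq> {}"
proof
  assume disjoint: "A \<inter> B = {}"
  have "A \<subseteq> U" "B \<subseteq> U" using assms(2,6) member_subset by blast+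
  have no_triangle: False
    if "X \<in> F" "Y \<in> F" "Z \<in> F" "x \<in> X \<inter> Y" "y \<in> X \<inter> Z" "z \<in> Y \<inter> Z" "X \<inter> Y \<inter> Z = {}"
    for X Y Z x y z
    using helly_triple[OF that(1-3)] that(4-7) by blast
  \<comment> \<open>Whichever of S or U - S and of T or U - T lies in F, the two together with A or B
    form a pairwise intersecting triple without a common point.\<close>
  define S where "S = (B - {b1}) \<union> {a2}"
  define T where "T = {a2, b1}"
  have "S \<subseteq> U" "T \<subseteq> U" using assms \<open>A \<subseteq> U\<close> \<open>B \<subseteq> U\<close> unfolding S_def T_def by auto
  then consider "S \<in> F" "T \<in> F" | "S \<in> F" "U - T \<in> F" | "U - S \<in> F" "T \<in> F"
    | "U - S \<in> F" "U - T \<in> F"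
    using complete by blast
  then show False
  proof cases
    case 1
    show False
      by (rule no_triangle[of S T B a2 b2 b1])
        (use 1 assms disjoint in \<open>auto simp: S_def T_def\<close>)
  next
    case 2
    show False
      by (rule no_triangle[of S "U - T" A b2 a2 a1])
        (use 2 assms disjoint \<open>A \<subseteq> U\<close> \<open>B \<subseteq> U\<close> in \<open>auto simp: S_def T_def\<close>)
  next
    case 3
    show False
      by (rule no_triangle[of "U - S" T A b1 a1 a2])
        (use 3 assms disjoint \<open>A \<subseteq> U\<close> \<open>B \<subseteq> U\<close> in \<open>auto simp: S_def T_def\<close>)
  next
    case 4
    show False
      by (rule no_triangle[of "U - S" "U - T" B a1 b1 b2])
        (use 4 assms disjoint \<open>A \<subseteq> U\<close> \<open>B \<subseteq> U\<close> in \<open>auto simp: S_def T_def\<close>)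
  qed
qed

lemma common_point_of_non_singletons:
  assumes complete: "\<And>X. X \<subseteq> U \<Longrightarrow> X \<in> F \<or> U - X \<in> F"
  shows "\<exists>x\<in>U. \<forall>A\<in>F. \<forall>a\<in>A. \<forall>b\<in>A. a \<noteq> b \<longrightarrow> x \<in> A"
proof -
  define L where "L = {A \<in> F. \<exists>a\<in>A. \<exists>b\<in>A. a \<noteq> b}"
  have "L \<subseteq> F" unfolding L_def by blast
  moreover have "\<forall>A\<in>L. \<forall>B\<in>L. A \<inter> B \<noteq> {}"
    unfolding L_def using non_singletons_intersect[OF complete] by blast
  ultimately obtain x where "x \<in> U" "\<forall>A\<in>L. x \<in> A"
    using helly by blast
  then show ?thesis unfolding L_def by blast
qed

lemma eq_extremal_family_if_card_eq:
  assumes card_eq: "card F = 2 ^ (card U - 1) + card U - 1"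
  obtains x where "x \<in> U" "F = extremal_family U x"
proof -
  obtain x where x: "x \<in> U" and x_common: "\<forall>A\<in>F. \<forall>a\<in>A. \<forall>b\<in>A. a \<noteq> b \<longrightarrow> x \<in> A"
    using common_point_of_non_singletons[OF complete_if_card_eq[OF card_eq]] by blast
  have "F \<subseteq> extremal_family U x"
  proof
    fix A assume A: "A \<in> F"
    then obtain a where "a \<in> A" using empty_notin by (metis ex_in_conv)
    show "A \<in> extremal_family U x"
    proof (cases "x \<in> A \<or> A = {a}")
      case True
      then show ?thesis using A \<open>a \<in> A\<close> member_subset unfolding extremal_family_def by blast
    next
      case False
      then show ?thesis using A \<open>a \<in> A\<close> x_common by blast
    qed
  qed
  moreover have "finite (extremal_family U x)"
    using finite_subset[of "extremal_family U x" "Pow U"] finite_ground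
    by (auto simp: extremal_family_def)
  moreover have "card (extremal_family U x) = card F"
    using card_extremal_family[OF finite_ground x] card_eq by simp
  ultimately have "F = extremal_family U x"
    by (intro card_seteq) simp_all
  with x show ?thesis by (rule that)
qed

end

section \<open>Maximal independent sets\<close>

lemma independent_set_extends_to_maximal:
  assumes "simple_graph V E" and "independent_set V E S"
  shows "\<exists>M. maximal_independent_set V E M \<and> S \<subseteq> M"
proof -
  define C where "C = {T. independent_set V E T \<and> S \<subseteq> T}"
  have "C \<subseteq> Pow V" unfolding C_def independent_set_def by blast
  moreover have "finite V" using assms(1) unfolding simple_graph_def by blast
  ultimately have "finite C" by (meson finite_Pow_iff finite_subset)
  moreover have "C \<noteq> {}" using assms(2) unfolding C_def by blast
  ultimately obtain M where "M \<in> C" and M_max: "\<forall>T\<in>C. M \<subseteq> T \<longrightarrow> M = T"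
    using finite_has_maximal by blast
  then have "maximal_independent_set V E M"
    unfolding maximal_independent_set_def C_def by auto
  with \<open>M \<in> C\<close> show ?thesis unfolding C_def by blast
qed

definition mis_containing :: "'a set \<Rightarrow> ('a \<Rightarrow> 'a \<Rightarrow> bool) \<Rightarrow> 'a \<Rightarrow> 'a set set" where
  "mis_containing V E v = {M. maximal_independent_set V E M \<and> v \<in> M}"

lemma adjacent_iff_disjoint_mis_containing:
  assumes "simple_graph V E" and "u \<in> V" and "v \<in> V"
  shows "E u v \<longleftrightarrow> mis_containing V E u \<inter> mis_containing V E v = {}"
proof
  assume "E u v"
  then show "mis_containing V E u \<inter> mis_containing V E v = {}"
    unfolding mis_containing_def maximal_independent_set_def independent_set_def by blast
next
  assume disjoint: "mis_containing V E u \<inter> mis_containing V E v = {}"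
  show "E u v"
  proof (rule ccontr)
    assume "\<not> E u v"
    then have "independent_set V E {u, v}"
      using assms unfolding simple_graph_def independent_set_def by blast
    then obtain M where "maximal_independent_set V E M" "{u, v} \<subseteq> M"
      using independent_set_extends_to_maximal[OF assms(1)] by blast
    then show False using disjoint unfolding mis_containing_def by blast
  qed
qed

lemma mis_containing_nonempty:
  assumes "simple_graph V E" and "v \<in> V"
  shows "mis_containing V E v \<noteq> {}"
  using adjacent_iff_disjoint_mis_containing[OF assms assms(2)] assms(1)
  unfolding simple_graph_def by auto

lemma inj_on_mis_containing:
  assumes "simple_graph V E" and "twin_free V E"
  shows "inj_on (mis_containing V E) V"
proof (rule inj_onI)
  fix u v assume "u \<in> V" "v \<in> V" "mis_containing V E u = mis_containing V E v"
  then have "nbhd V E u = nbhd V E v"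
    using adjacent_iff_disjoint_mis_containing[OF assms(1)] unfolding nbhd_def by auto
  then show "u = v" using assms(2) \<open>u \<in> V\<close> \<open>v \<in> V\<close> unfolding twin_free_def by blast
qed

lemma helly_family_mis_containing:
  assumes "simple_graph V E"
  shows "helly_family {M. maximal_independent_set V E M} (mis_containing V E ` V)"
proof
  have "{M. maximal_independent_set V E M} \<subseteq> Pow V"
    unfolding maximal_independent_set_def independent_set_def by blast
  then show "finite {M. maximal_independent_set V E M}"
    using assms unfolding simple_graph_def by (metis finite_Pow_iff finite_subset)
next
  show "A \<subseteq> {M. maximal_independent_set V E M}" if "A \<in> mis_containing V E ` V" for A
    using that unfolding mis_containing_def by blast
next
  show "{} \<notin> mis_containing V E ` V"
    using mis_containing_nonempty[OF assms] by (metis imageE)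
next
  fix I assume I: "I \<subseteq> mis_containing V E ` V" and pairwise: "\<forall>A\<in>I. \<forall>B\<in>I. A \<inter> B \<noteq> {}"
  define J where "J = {v \<in> V. mis_containing V E v \<in> I}"
  have "independent_set V E J"
    unfolding independent_set_def J_def
    using pairwise adjacent_iff_disjoint_mis_containing[OF assms] by blast
  then obtain M where M: "maximal_independent_set V E M" "J \<subseteq> M"
    using independent_set_extends_to_maximal[OF assms] by blast
  have "\<forall>A\<in>I. M \<in> A"
  proof
    fix A assume "A \<in> I"
    then obtain v where "v \<in> J" "A = mis_containing V E v" using I unfolding J_def by auto
    then show "M \<in> A" using M unfolding mis_containing_def by blast
  qed
  with M(1) show "\<exists>M\<in>{M. maximal_independent_set V E M}. \<forall>A\<in>I. M \<in> A" by blast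
qed

lemma graph_iso_disjointness_mis_containing:
  assumes "simple_graph V E" and "twin_free V E"
  shows "graph_iso V E (mis_containing V E ` V) (\<lambda>A B. A \<inter> B = {})"
  using inj_on_mis_containing[OF assms] adjacent_iff_disjoint_mis_containing[OF assms(1)]
  unfolding graph_iso_def bij_betw_def by blast

theorem corollary2p10:
  fixes V :: "'a set" and E :: "'a \<Rightarrow> 'a \<Rightarrow> bool" and k :: nat
  assumes "k \<ge> 2"
    and "simple_graph V E"
    and "twin_free V E"
    and "i_max V E = k"
  shows "card V \<le> 2 ^ (k - 1) + k - 1 \<and>
         (card V = 2 ^ (k - 1) + k - 1 \<longrightarrow> graph_iso V E (ext_V k) (ext_E k))"
proof -
  let ?MIS = "{M. maximal_independent_set V E M}" and ?\<sigma> = "mis_containing V E"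
  interpret helly_family ?MIS "?\<sigma> ` V"
    by (rule helly_family_mis_containing[OF assms(2)])
  have card_V: "card (?\<sigma> ` V) = card V"
    using card_image[OF inj_on_mis_containing[OF assms(2,3)]] .
  have card_MIS: "card ?MIS = k" using assms(4) unfolding i_max_def .
  have "card V \<le> 2 ^ (k - 1) + k - 1" using card_le card_V card_MIS by simp
  moreover have "graph_iso V E (ext_V k) (ext_E k)" if "card V = 2 ^ (k - 1) + k - 1"
  proof -
    have "card (?\<sigma> ` V) = 2 ^ (card ?MIS - 1) + card ?MIS - 1"
      using that card_V card_MIS by simp
    then obtain x where "x \<in> ?MIS" "?\<sigma> ` V = extremal_family ?MIS x"
      by (rule eq_extremal_family_if_card_eq)
    then have "graph_iso (ext_V k) (ext_E k) (?\<sigma> ` V) (\<lambda>A B. A \<inter> B = {})"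
      using graph_iso_ext_extremal_family[OF finite_ground _ card_MIS] by simp
    then show ?thesis
      using graph_iso_trans[OF graph_iso_disjointness_mis_containing[OF assms(2,3)] graph_iso_sym]
      by blast
  qed
  ultimately show ?thesis by blast
qed

end
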